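(* For all integers $Z\ge1$, $F\ge Z+1$, $\ell\ge1$ and $x\in\{0,1,\dots,\lceil\frac{Z+1}{F-Z}\rceil-1\}$, $$s\!\left(F,\ \ell\binom{F}{Z}-x,\ Z\right)=\frac{\ell\binom{F}{Z}(F-Z)}{Z+1}=\ell\binom{F}{Z+1},$$ and an RPDA$\left(F,\ell\binom{F}{Z}-x,Z\right)$ exists.
   Context: A placement delivery array $S$-PDA$(F,K,Z)$ is an $F\times K$ array $R=(r_{j,k})$, $1\le j\le F$, $1\le k\le K$, over a finite set $S$ such that: (1) each cell is either empty or contains an element of $S$; (2) each column contains exactly $Z$ empty cells; (3) each element of $S$ occurs at most once in each row and at most once in each column; (4) if two distinct nonempty cells satisfy $r_{j_1,k_1}=r_{j_2,k_2}=t\in S$, then the cells $r_{j_1,k_2}$ and $r_{j_2,k_1}$ are empty. For integers $F,K\ge1$, $0\le Z\le F$, define $s(F,K,Z)=\min\{|S| : \text{there exists an } S\text{-PDA}(F,K,Z)\}$. An RPDA$(F,K,Z)$ (restricted PDA) is an $S$-PDA$(F,K,Z)$ with $|S|=\left\lceil\frac{K(F-Z)}{Z+1}\right\rceil$. *)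

theory Defs
  imports Complex_Main
begin

text \<open>An F x K array over a symbol set S is modelled as a function
  r :: nat => nat => 'a option, with rows j < F and columns k < K (0-based);
  None is an empty cell, Some t is a cell containing t.\<close>

definition is_PDA :: "'a set \<Rightarrow> nat \<Rightarrow> nat \<Rightarrow> nat \<Rightarrow> (nat \<Rightarrow> nat \<Rightarrow> 'a option) \<Rightarrow> bool" where
  "is_PDA S F K Z r \<longleftrightarrow>
     finite S \<and>
     (\<forall>j<F. \<forall>k<K. \<forall>t. r j k = Some t \<longrightarrow> t \<in> S) \<and>
     (\<forall>k<K. card {j. j < F \<and> r j k = None} = Z) \<and>
     (\<forall>j<F. \<forall>k1<K. \<forall>k2<K. \<forall>t. r j k1 = Some t \<and> r j k2 = Some t \<longrightarrow> k1 = k2) \<and>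
     (\<forall>k<K. \<forall>j1<F. \<forall>j2<F. \<forall>t. r j1 k = Some t \<and> r j2 k = Some t \<longrightarrow> j1 = j2) \<and>
     (\<forall>j1<F. \<forall>j2<F. \<forall>k1<K. \<forall>k2<K. \<forall>t.
        (j1, k1) \<noteq> (j2, k2) \<and> r j1 k1 = Some t \<and> r j2 k2 = Some t \<longrightarrow>
        r j1 k2 = None \<and> r j2 k1 = None)"

text \<open>s(F,K,Z): minimal size of a symbol set admitting a PDA. Symbols are taken
  from nat, which is no loss of generality since any finite set is in bijection
  with a set of naturals.\<close>

definition s_PDA :: "nat \<Rightarrow> nat \<Rightarrow> nat \<Rightarrow> nat" where
  "s_PDA F K Z = (LEAST n. \<exists>(S :: nat set) r. is_PDA S F K Z r \<and> card S = n)"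

definition RPDA_exists :: "nat \<Rightarrow> nat \<Rightarrow> nat \<Rightarrow> bool" where
  "RPDA_exists F K Z \<longleftrightarrow>
     (\<exists>(S :: nat set) r. is_PDA S F K Z r \<and>
        int (card S) = \<lceil>real (K * (F - Z)) / real (Z + 1)\<rceil>)"

end

theory Submission
  imports Defs
begin

text \<open>Counting the filled cells gives the lower bound: there are \<open>K (F - Z)\<close> of them,
  and a symbol can fill at most \<open>Z + 1\<close> cells, since two occurrences of the same symbol
  lie in distinct rows and columns and every further occurrence meets the column of a
  fixed one in an empty cell. For \<open>K = l\<cdot>C(F,Z) - x\<close> the hypothesis on \<open>x\<close> makes
  the resulting bound round up to \<open>l\<cdot>C(F,Z+1)\<close>. This is attained by \<open>l\<close> copies of the
  Maddah-Ali--Niesen array (with some columns dropped): columns are labelled by a copy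
  index and a \<open>Z\<close>-subset \<open>T\<close> of the rows, the rows in \<open>T\<close> are empty, and row \<open>j \<notin> T\<close>
  carries the symbol (copy, \<open>T \<union> {j}\<close>).\<close>

lemma binomial_mult_diff_eq: "(n choose k) * (n - k) = (n choose Suc k) * Suc k"
proof (cases n)
  case (Suc m)
  have "(n - k) * (n choose k) = n * ((n - 1) choose k)" by (rule binomial_absorb_comp)
  also have "\<dots> = (n choose Suc k) * Suc k" using Suc_times_binomial_eq[of m k] Suc by simp
  finally show ?thesis by (simp add: mult.commute)
qed simp

lemma PDA_finite: "is_PDA S F K Z r \<Longrightarrow> finite S"
  by (simp add: is_PDA_def)

lemma PDA_symbol_mem:
  assumes "is_PDA S F K Z r" "j < F" "k < K" "r j k = Some t"
  shows "t \<in> S"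
proof -
  have "\<forall>j<F. \<forall>k<K. \<forall>t. r j k = Some t \<longrightarrow> t \<in> S"
    using assms(1) unfolding is_PDA_def by (elim conjE)
  then show ?thesis using assms(2-4) by blast
qed

lemma PDA_card_empty:
  assumes "is_PDA S F K Z r" "k < K"
  shows "card {j. j < F \<and> r j k = None} = Z"
proof -
  have "\<forall>k<K. card {j. j < F \<and> r j k = None} = Z"
    using assms(1) unfolding is_PDA_def by (elim conjE)
  then show ?thesis using assms(2) by blast
qed

lemma PDA_row_unique:
  assumes "is_PDA S F K Z r" "j < F" "k1 < K" "k2 < K" "r j k1 = Some t" "r j k2 = Some t"
  shows "k1 = k2"
proof -
  have "\<forall>j<F. \<forall>k1<K. \<forall>k2<K. \<forall>t. r j k1 = Some t \<and> r j k2 = Some t \<longrightarrow> k1 = k2"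
    using assms(1) unfolding is_PDA_def by (elim conjE)
  then show ?thesis using assms(2-) by blast
qed

lemma PDA_column_unique:
  assumes "is_PDA S F K Z r" "k < K" "j1 < F" "j2 < F" "r j1 k = Some t" "r j2 k = Some t"
  shows "j1 = j2"
proof -
  have "\<forall>k<K. \<forall>j1<F. \<forall>j2<F. \<forall>t. r j1 k = Some t \<and> r j2 k = Some t \<longrightarrow> j1 = j2"
    using assms(1) unfolding is_PDA_def by (elim conjE)
  then show ?thesis using assms(2-) by blast
qed

lemma PDA_cross_empty:
  assumes "is_PDA S F K Z r" "j1 < F" "j2 < F" "k1 < K" "k2 < K" "(j1, k1) \<noteq> (j2, k2)"
    "r j1 k1 = Some t" "r j2 k2 = Some t"
  shows "r j1 k2 = None"
proof -
  have "\<forall>j1<F. \<forall>j2<F. \<forall>k1<K. \<forall>k2<K. \<forall>t.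
      (j1, k1) \<noteq> (j2, k2) \<and> r j1 k1 = Some t \<and> r j2 k2 = Some t \<longrightarrow>
      r j1 k2 = None \<and> r j2 k1 = None"
    using assms(1) unfolding is_PDA_def by (elim conjE)
  then show ?thesis using assms(2-) by blast
qed

lemma PDA_card_filled_column:
  assumes "is_PDA S F K Z r" and "k < K"
  shows "card {j. j < F \<and> r j k \<noteq> None} = F - Z"
proof -
  have "{j. j < F \<and> r j k \<noteq> None} = {..<F} - {j. j < F \<and> r j k = None}" by auto
  then show ?thesis
    using PDA_card_empty[OF assms] by (simp add: card_Diff_subset subset_eq)
qed

lemma PDA_card_occurrences:
  assumes P: "is_PDA S F K Z r"
  shows "card {(k, j). k < K \<and> j < F \<and> r j k = Some t} \<le> Z + 1"
proof -
  define A where "A = {(k, j). k < K \<and> j < F \<and> r j k = Some t}"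
  have "card A \<le> Z + 1"
  proof (cases "A = {}")
    case False
    then obtain k0 j0 where kj0: "(k0, j0) \<in> A" by auto
    then have k0: "k0 < K" "j0 < F" "r j0 k0 = Some t" unfolding A_def by auto
    have fin: "finite A" unfolding A_def
      by (rule finite_subset[of _ "{..<K} \<times> {..<F}"]) auto
    have "inj_on snd (A - {(k0, j0)})"
    proof (rule inj_onI)
      fix p q assume "p \<in> A - {(k0, j0)}" "q \<in> A - {(k0, j0)}" "snd p = snd q"
      then obtain k1 k2 j where "p = (k1, j)" "q = (k2, j)" "j < F" "k1 < K" "k2 < K"
          "r j k1 = Some t" "r j k2 = Some t"
        unfolding A_def by auto
      then show "p = q" using PDA_row_unique[OF P] by blast
    qed
    then have "card (A - {(k0, j0)}) = card (snd ` (A - {(k0, j0)}))"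
      by (simp add: card_image)
    also have "\<dots> \<le> card {j. j < F \<and> r j k0 = None}"
    proof (rule card_mono)
      show "snd ` (A - {(k0, j0)}) \<subseteq> {j. j < F \<and> r j k0 = None}"
      proof
        fix j assume "j \<in> snd ` (A - {(k0, j0)})"
        then obtain p where "p \<in> A - {(k0, j0)}" "j = snd p" by blast
        then obtain k where "(k, j) \<in> A - {(k0, j0)}" by (cases p) simp
        then have "k < K" "j < F" "r j k = Some t" "(j, k) \<noteq> (j0, k0)"
          unfolding A_def by auto
        then show "j \<in> {j. j < F \<and> r j k0 = None}"
          using PDA_cross_empty[OF P _ k0(2) _ k0(1)] k0(3) by blast
      qed
    qed simp
    also have "\<dots> = Z" using PDA_card_empty[OF P k0(1)] .
    finally show ?thesis using kj0 fin by (simp add: card_Diff_singleton)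
  qed simp
  then show ?thesis unfolding A_def .
qed

lemma PDA_card_symbols_lower_bound:
  assumes P: "is_PDA S F K Z r"
  shows "K * (F - Z) \<le> (Z + 1) * card S"
proof -
  have fin: "finite S" using PDA_finite[OF P] .
  define occ where "occ t = {(k, j). k < K \<and> j < F \<and> r j k = Some t}" for t
  define filled where "filled = (SIGMA k:{..<K}. {j. j < F \<and> r j k \<noteq> None})"
  have "card filled = (\<Sum>k<K. card {j. j < F \<and> r j k \<noteq> None})"
    unfolding filled_def by (rule card_SigmaI) auto
  also have "\<dots> = K * (F - Z)" using PDA_card_filled_column[OF P] by simp
  finally have "K * (F - Z) = card filled" ..
  also have "\<dots> \<le> card (\<Union>t\<in>S. occ t)"
  proof (rule card_mono)
    show "finite (\<Union>t\<in>S. occ t)"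
      using fin unfolding occ_def
      by (intro finite_UN_I) (auto intro: finite_subset[of _ "{..<K} \<times> {..<F}"])
    show "filled \<subseteq> (\<Union>t\<in>S. occ t)"
      unfolding filled_def occ_def by (auto intro: PDA_symbol_mem[OF P])
  qed
  also have "\<dots> \<le> (\<Sum>t\<in>S. card (occ t))" by (rule card_UN_le[OF fin])
  also have "\<dots> \<le> (\<Sum>t\<in>S. Z + 1)"
    by (rule sum_mono) (use PDA_card_occurrences[OF P] in \<open>simp add: occ_def\<close>)
  finally show ?thesis by (simp add: mult.commute)
qed

lemma PDA_card_ge_ceiling:
  assumes "is_PDA S F K Z r"
  shows "\<lceil>real (K * (F - Z)) / real (Z + 1)\<rceil> \<le> int (card S)"
proof -
  have "real (K * (F - Z)) \<le> real (Z + 1) * real (card S)"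
    using PDA_card_symbols_lower_bound[OF assms] by (metis of_nat_le_iff of_nat_mult)
  then show ?thesis by (simp add: ceiling_le_iff divide_le_eq mult.commute)
qed

lemma s_PDA_eq_if_RPDA:
  assumes "is_PDA (S :: nat set) F K Z r"
    and "int (card S) = \<lceil>real (K * (F - Z)) / real (Z + 1)\<rceil>"
  shows "s_PDA F K Z = card S"
  unfolding s_PDA_def
proof (rule Least_equality)
  show "\<exists>(S' :: nat set) r. is_PDA S' F K Z r \<and> card S' = card S" using assms(1) by blast
  show "card S \<le> n" if n: "\<exists>(S' :: nat set) r. is_PDA S' F K Z r \<and> card S' = n" for n
  proof -
    obtain S' :: "nat set" and r' where "is_PDA S' F K Z r'" "card S' = n" using n by blast
    then have "int (card S) \<le> int n" using PDA_card_ge_ceiling assms(2) by metis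
    then show ?thesis by simp
  qed
qed

lemma is_PDA_map_option:
  assumes P: "is_PDA S F K Z r" and inj: "inj_on f S"
  shows "is_PDA (f ` S) F K Z (\<lambda>j k. map_option f (r j k))"
proof -
  have same_symbol: "\<exists>u. r j1 k1 = Some u \<and> r j2 k2 = Some u"
    if f_eq: "map_option f (r j1 k1) = Some t" "map_option f (r j2 k2) = Some t"
      and idx: "j1 < F" "j2 < F" "k1 < K" "k2 < K" for j1 j2 k1 k2 t
  proof -
    obtain u1 u2 where u: "r j1 k1 = Some u1" "r j2 k2 = Some u2" "f u1 = f u2"
      using f_eq by auto
    have "u1 = u2"
      using inj_onD[OF inj u(3)] PDA_symbol_mem[OF P idx(1,3) u(1)] PDA_symbol_mem[OF P idx(2,4) u(2)] .
    then show ?thesis using u by blast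
  qed
  show ?thesis unfolding is_PDA_def
  proof (intro conjI allI impI)
    show "finite (f ` S)" using PDA_finite[OF P] by simp
    show "t \<in> f ` S" if "j < F" "k < K" "map_option f (r j k) = Some t" for j k t
      using that PDA_symbol_mem[OF P that(1,2)] by auto
    show "card {j. j < F \<and> map_option f (r j k) = None} = Z" if "k < K" for k
      using PDA_card_empty[OF P that] by simp
    show "k1 = k2" if idx: "j < F" "k1 < K" "k2 < K"
      and eq: "map_option f (r j k1) = Some t \<and> map_option f (r j k2) = Some t" for j k1 k2 t
    proof -
      obtain u where "r j k1 = Some u" "r j k2 = Some u"
        using same_symbol[of j k1 t j k2] idx eq by blast
      then show ?thesis by (rule PDA_row_unique[OF P idx])
    qed
    show "j1 = j2" if idx: "k < K" "j1 < F" "j2 < F"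
      and eq: "map_option f (r j1 k) = Some t \<and> map_option f (r j2 k) = Some t" for k j1 j2 t
    proof -
      obtain u where "r j1 k = Some u" "r j2 k = Some u"
        using same_symbol[of j1 k t j2 k] idx eq by blast
      then show ?thesis by (rule PDA_column_unique[OF P idx])
    qed
    show "map_option f (r j1 k2) = None" "map_option f (r j2 k1) = None"
      if idx: "j1 < F" "j2 < F" "k1 < K" "k2 < K" and eq: "(j1, k1) \<noteq> (j2, k2) \<and>
        map_option f (r j1 k1) = Some t \<and> map_option f (r j2 k2) = Some t" for j1 j2 k1 k2 t
    proof -
      obtain u where u: "r j1 k1 = Some u" "r j2 k2 = Some u"
        using same_symbol[of j1 k1 t j2 k2] idx eq by blast
      have "(j1, k1) \<noteq> (j2, k2)" "(j2, k2) \<noteq> (j1, k1)" using eq by auto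
      then show "map_option f (r j1 k2) = None" "map_option f (r j2 k1) = None"
        using PDA_cross_empty[OF P idx _ u] PDA_cross_empty[OF P idx(2,1,4,3) _ u(2,1)]
        by simp_all
    qed
  qed
qed

lemma PDA_exists_nat_symbols:
  assumes "is_PDA S F K Z r"
  shows "\<exists>(S' :: nat set) r'. is_PDA S' F K Z r' \<and> card S' = card S"
proof -
  obtain f and n :: nat where "inj_on f S" "f ` S = {..<n}"
    using finite_imp_inj_to_nat_seg[OF PDA_finite[OF assms]] by (metis lessThan_def)
  then show ?thesis using is_PDA_map_option[OF assms] card_image by blast
qed

lemma finite_subsets_card: "finite A \<Longrightarrow> finite {B. B \<subseteq> A \<and> card B = n}"
  by (rule finite_subset[of _ "Pow A"]) auto

lemma is_PDA_subset_array:
  fixes p :: "nat \<Rightarrow> nat"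
  assumes inj: "inj_on (\<lambda>k. (p k, T k)) {..<K}"
    and T: "\<And>k. k < K \<Longrightarrow> p k < l \<and> T k \<subseteq> {..<F} \<and> card (T k) = Z"
  shows "is_PDA ({..<l} \<times> {B. B \<subseteq> {..<F} \<and> card B = Z + 1}) F K Z
           (\<lambda>j k. if j \<in> T k then None else Some (p k, insert j (T k)))"
    (is "is_PDA ?S F K Z ?r")
proof -
  have fin: "finite (T k)" if "k < K" for k
    using T[OF that] finite_subset by blast
  have same_column: "k1 = k2"
    if "k1 < K" "k2 < K" "p k1 = p k2" "insert j (T k1) = insert j (T k2)"
       "j \<notin> T k1" "j \<notin> T k2" for j k1 k2
  proof -
    have "T k1 = T k2" using that(4-6) by (metis Diff_insert_absorb)
    then show ?thesis using inj_onD[OF inj] that(1-3) by simp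
  qed
  have crossing: "j1 \<in> T k2"
    if "k1 < K" "k2 < K" "(j1, k1) \<noteq> (j2, k2)" "?r j1 k1 = Some t" "?r j2 k2 = Some t"
    for j1 j2 k1 k2 t
  proof -
    have eq: "p k1 = p k2" "insert j1 (T k1) = insert j2 (T k2)" "j1 \<notin> T k1" "j2 \<notin> T k2"
      using that(4,5) by (auto split: if_splits)
    have "j1 \<noteq> j2"
    proof
      assume "j1 = j2"
      then have "k1 = k2" using same_column[OF that(1,2) eq(1)] eq(2-4) by simp
      with \<open>j1 = j2\<close> show False using that(3) by simp
    qed
    then show ?thesis using eq(2) by blast
  qed
  show ?thesis unfolding is_PDA_def
  proof (intro conjI allI impI)
    show "finite ?S" by (rule finite_cartesian_product) (simp_all add: finite_subsets_card)
    show "t \<in> ?S" if "j < F" "k < K" "?r j k = Some t" for j k t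
      using that T[OF \<open>k < K\<close>] fin[OF \<open>k < K\<close>] by (auto split: if_splits)
    show "card {j. j < F \<and> ?r j k = None} = Z" if "k < K" for k
      using T[OF that] by (simp add: Int_absorb1 Collect_conj_eq flip: lessThan_def)
    show "k1 = k2" if "j < F" "k1 < K" "k2 < K" "?r j k1 = Some t \<and> ?r j k2 = Some t"
      for j k1 k2 t
    proof -
      have "p k1 = p k2" "insert j (T k1) = insert j (T k2)" "j \<notin> T k1" "j \<notin> T k2"
        using that(4) by (auto split: if_splits)
      then show ?thesis by (rule same_column[OF that(2,3)])
    qed
    show "j1 = j2" if "k < K" "j1 < F" "j2 < F" "?r j1 k = Some t \<and> ?r j2 k = Some t"
      for k j1 j2 t
      using that by (auto split: if_splits)
    show "?r j1 k2 = None"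
      if "j1 < F" "j2 < F" "k1 < K" "k2 < K"
        "(j1, k1) \<noteq> (j2, k2) \<and> ?r j1 k1 = Some t \<and> ?r j2 k2 = Some t" for j1 j2 k1 k2 t
      using crossing[of k1 k2 j1 j2 t] that by simp
    show "?r j2 k1 = None"
      if "j1 < F" "j2 < F" "k1 < K" "k2 < K"
        "(j1, k1) \<noteq> (j2, k2) \<and> ?r j1 k1 = Some t \<and> ?r j2 k2 = Some t" for j1 j2 k1 k2 t
      using crossing[of k2 k1 j2 j1 t] that by auto
  qed
qed

lemma PDA_exists_copies_of_subsets:
  assumes "Z \<le> F" and "K \<le> l * (F choose Z)"
  shows "\<exists>(S :: nat set) r. is_PDA S F K Z r \<and> card S = l * (F choose (Z + 1))"
proof -
  define c where "c = F choose Z"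
  have c: "c > 0" using assms(1) unfolding c_def by simp
  have "card {..<c} = card {T. T \<subseteq> {..<F} \<and> card T = Z}"
    unfolding c_def by (simp add: n_subsets)
  then obtain g where g: "bij_betw g {..<c} {T. T \<subseteq> {..<F} \<and> card T = Z}"
    using finite_same_card_bij[OF finite_lessThan finite_subsets_card[OF finite_lessThan]] by blast
  have "inj_on (\<lambda>k. (k div c, g (k mod c))) {..<K}"
  proof (rule inj_onI)
    fix k1 k2 assume "k1 \<in> {..<K}" "k2 \<in> {..<K}"
      and eq: "(k1 div c, g (k1 mod c)) = (k2 div c, g (k2 mod c))"
    have "k1 mod c = k2 mod c"
      using inj_onD[OF bij_betw_imp_inj_on[OF g]] eq c by simp
    then show "k1 = k2" using eq by (metis div_mult_mod_eq prod.inject)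
  qed
  moreover have "k div c < l \<and> g (k mod c) \<subseteq> {..<F} \<and> card (g (k mod c)) = Z" if "k < K" for k
    using that assms(2) c bij_betwE[OF g]
    by (auto simp: c_def div_less_iff_less_mult)
  ultimately have P: "is_PDA ({..<l} \<times> {B. B \<subseteq> {..<F} \<and> card B = Z + 1}) F K Z
      (\<lambda>j k. if j \<in> g (k mod c) then None else Some (k div c, insert j (g (k mod c))))"
    by (rule is_PDA_subset_array)
  have card: "card ({..<l} \<times> {B. B \<subseteq> {..<F} \<and> card B = Z + 1}) = l * (F choose (Z + 1))"
    by (simp add: n_subsets card_cartesian_product)
  show ?thesis using PDA_exists_nat_symbols[OF P] unfolding card .
qed

lemma ceiling_bound_eq_choose:
  fixes Z F l x :: nat
  assumes "Z < F" and "l \<ge> 1"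
    and "int x \<le> \<lceil>real (Z + 1) / real (F - Z)\<rceil> - 1"
  shows "\<lceil>real ((l * (F choose Z) - x) * (F - Z)) / real (Z + 1)\<rceil> = int (l * (F choose (Z + 1)))"
proof -
  define N where "N = l * (F choose (Z + 1))"
  have full: "l * (F choose Z) * (F - Z) = N * (Z + 1)"
    unfolding N_def using binomial_mult_diff_eq[of F Z] by (metis Suc_eq_plus1 mult.assoc)
  have "real x < real (Z + 1) / real (F - Z)" using assms(3) by (simp add: less_ceiling_iff)
  then have "real x * real (F - Z) < real (Z + 1)"
    using assms(1) by (simp only: pos_less_divide_eq of_nat_0_less_iff zero_less_diff)
  then have small: "x * (F - Z) < Z + 1" by (simp only: of_nat_mult[symmetric] of_nat_less_iff)
  have "N \<ge> 1" using assms(1,2) unfolding N_def by (simp add: Suc_le_eq)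
  then have "Z + 1 \<le> N * (Z + 1)" using mult_le_mono1[of 1 N "Z + 1"] by simp
  then have "x * (F - Z) \<le> l * (F choose Z) * (F - Z)" using small full by linarith
  then have "(l * (F choose Z) - x) * (F - Z) + x * (F - Z) = N * (Z + 1)"
    using full by (simp add: diff_mult_distrib)
  then have "real ((l * (F choose Z) - x) * (F - Z)) = real N * real (Z + 1) - real (x * (F - Z))"
    by (metis add_diff_cancel_right' of_nat_add of_nat_mult)
  then have "real ((l * (F choose Z) - x) * (F - Z)) / real (Z + 1)
      = real N - real (x * (F - Z)) / real (Z + 1)"
    by (simp add: field_simps)
  moreover have "real (x * (F - Z)) / real (Z + 1) < 1"
    by (rule divide_less_eq_1_pos[THEN iffD2]) (simp, simp only: of_nat_less_iff small)
  ultimately show ?thesis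
    unfolding N_def by (intro ceiling_unique) auto
qed

theorem mainTheorem10:
  fixes Z F l x :: nat
  assumes "Z \<ge> 1" and "F \<ge> Z + 1" and "l \<ge> 1"
    and "int x \<le> \<lceil>real (Z + 1) / real (F - Z)\<rceil> - 1"
  shows "real (s_PDA F (l * (F choose Z) - x) Z)
           = real (l * (F choose Z) * (F - Z)) / real (Z + 1)
       \<and> s_PDA F (l * (F choose Z) - x) Z = l * (F choose (Z + 1))
       \<and> RPDA_exists F (l * (F choose Z) - x) Z"
proof -
  define K where "K = l * (F choose Z) - x"
  obtain S :: "nat set" and r where P: "is_PDA S F K Z r"
    and card_S: "card S = l * (F choose (Z + 1))"
    using PDA_exists_copies_of_subsets[of Z F K l] assms(2) unfolding K_def by auto
  have ceil: "int (card S) = \<lceil>real (K * (F - Z)) / real (Z + 1)\<rceil>"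
    using ceiling_bound_eq_choose[of Z F l x] assms card_S unfolding K_def by simp
  have s: "s_PDA F K Z = l * (F choose (Z + 1))"
    using s_PDA_eq_if_RPDA[OF P ceil] card_S by simp
  have "real (l * (F choose Z) * (F - Z)) / real (Z + 1) = real (l * (F choose (Z + 1)))"
    using binomial_mult_diff_eq[of F Z] by (simp add: field_simps flip: of_nat_mult)
  moreover have "RPDA_exists F K Z" unfolding RPDA_exists_def using P ceil by blast
  ultimately show ?thesis using s unfolding K_def by simp
qed

end
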